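(* Let $S$ be a probability law on $\{1,2,\dots\}$ and write $\hat S(\lambda)=\sum_{j\ge1}S(j)e^{ij\lambda}=\rho(\lambda)e^{i\tau(\lambda)}$ with $\rho(\lambda)=|\hat S(\lambda)|$. Then for all $r\in[0,1)$ and $\theta\in(-\pi,\pi)$, $$\frac14\int_{-\pi}^{\pi}\left(\frac1\pi+P_{r\rho(\lambda)}(\tau(\lambda)-\theta)+P_{r\rho(\lambda)}(\tau(\lambda)+\theta)\right)d\lambda=1.$$
   Context: $P_s(t)$ denotes the Poisson kernel $P_s(t)=\frac{1}{2\pi}\,\frac{1-s^2}{1-2s\cos t+s^2}$ for $s\in[0,1)$. *)

theory Defs
  imports "HOL-Analysis.Analysis"
begin

definition poisson_kernel :: "real \<Rightarrow> real \<Rightarrow> real" where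
  "poisson_kernel s t = (1 / (2 * pi)) * (1 - s^2) / (1 - 2 * s * cos t + s^2)"

definition S_hat :: "(nat \<Rightarrow> real) \<Rightarrow> real \<Rightarrow> complex" where
  "S_hat S l = (\<Sum>j. complex_of_real (S j) * cis (real j * l))"

definition prob_law_pos :: "(nat \<Rightarrow> real) \<Rightarrow> bool" where
  "prob_law_pos S \<longleftrightarrow> S 0 = 0 \<and> (\<forall>j. 0 \<le> S j) \<and> S sums 1"

end

theory Submission
  imports Defs "HOL-Complex_Analysis.Complex_Analysis"
begin

text \<open>With \<open>z = e^(il)\<close> one has \<open>S_hat(l) = z G(z)\<close>, where \<open>G\<close> is the generating function of
  \<open>S(j+1)\<close>: holomorphic in the unit disc and bounded by 1 on its closure. For \<open>c = r e^(i\<phi>)\<close>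
  the number \<open>w = c S_hat(l) = r \<rho>(l) e^(i(\<tau>(l)+\<phi>))\<close> lies in the disc, and
  \<open>Re ((1+w)/(1-w)) = 2\<pi> P_{r\<rho>(l)}(\<tau>(l)+\<phi>)\<close>. But \<open>(1+w)/(1-w) = 1 + z h(z)\<close> with
  \<open>h = 2cG/(1 - czG)\<close> holomorphic in the disc, so by Cauchy's theorem on the unit circle the
  mean of \<open>(1+w)/(1-w)\<close> over \<open>l\<close> is 1. Hence each Poisson term integrates to 1; take
  \<open>\<phi> = \<plusminus>\<theta>\<close>.\<close>

definition gen_fun :: "(nat \<Rightarrow> real) \<Rightarrow> complex \<Rightarrow> complex" where
  "gen_fun a z = (\<Sum>n. complex_of_real (a n) * z ^ n)"

lemma norm_gen_fun_term_le:
  assumes "0 \<le> a n" "norm z \<le> 1"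
  shows "norm (complex_of_real (a n) * z ^ n) \<le> a n"
  using assms by (simp add: norm_mult norm_power mult_left_le power_le_one)

lemma summable_norm_gen_fun:
  assumes "summable a" "\<And>n. 0 \<le> a n" "norm z \<le> 1"
  shows "summable (\<lambda>n. norm (complex_of_real (a n) * z ^ n))"
  by (rule summable_comparison_test[OF _ assms(1)]) (use assms norm_gen_fun_term_le in auto)

lemma uniform_limit_gen_fun:
  assumes "summable a" "\<And>n. 0 \<le> a n"
  shows "uniform_limit (cball 0 1) (\<lambda>N z. \<Sum>n<N. complex_of_real (a n) * z ^ n) (gen_fun a)
           sequentially"
  unfolding gen_fun_def[abs_def]
  by (rule Weierstrass_m_test[OF _ assms(1)]) (use assms norm_gen_fun_term_le in auto)

lemma
  assumes "summable a" "\<And>n. 0 \<le> a n"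
  shows continuous_on_gen_fun: "continuous_on (cball 0 1) (gen_fun a)"
    and holomorphic_on_gen_fun: "gen_fun a holomorphic_on ball 0 1"
proof -
  have "\<forall>\<^sub>F N in sequentially.
          continuous_on (cball 0 1) (\<lambda>z. \<Sum>n<N. complex_of_real (a n) * z ^ n) \<and>
          (\<lambda>z. \<Sum>n<N. complex_of_real (a n) * z ^ n) holomorphic_on ball 0 1"
    by (intro always_eventually allI conjI) (auto intro!: continuous_intros holomorphic_intros)
  from holomorphic_uniform_limit[OF this uniform_limit_gen_fun[OF assms]]
  show "continuous_on (cball 0 1) (gen_fun a)" "gen_fun a holomorphic_on ball 0 1"
    by auto
qed

lemma norm_gen_fun_le:
  assumes "summable a" "\<And>n. 0 \<le> a n" "norm z \<le> 1"
  shows "norm (gen_fun a z) \<le> suminf a"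
proof -
  have "norm (gen_fun a z) \<le> (\<Sum>n. norm (complex_of_real (a n) * z ^ n))"
    unfolding gen_fun_def by (rule summable_norm[OF summable_norm_gen_fun[OF assms]])
  also have "\<dots> \<le> suminf a"
    using assms norm_gen_fun_term_le summable_norm_gen_fun by (intro suminf_le) auto
  finally show ?thesis .
qed

lemma S_hat_eq_cis_gen_fun:
  assumes "prob_law_pos S"
  shows "S_hat S l = cis l * gen_fun (\<lambda>j. S (Suc j)) (cis l)"
proof -
  have nonneg: "\<And>j. 0 \<le> S j" and "S 0 = 0" and "summable S"
    using assms by (auto simp: prob_law_pos_def sums_summable)
  then have "summable (\<lambda>j. S (Suc j))"
    by (simp add: summable_Suc_iff)
  from summable_norm_gen_fun[OF this nonneg, of "cis l"]
  have summable_tail: "summable (\<lambda>j. complex_of_real (S (Suc j)) * cis l ^ j)"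
    by (rule summable_norm_cancel) simp
  have shifted: "complex_of_real (S (Suc j)) * cis (real (Suc j) * l)
      = cis l * (complex_of_real (S (Suc j)) * cis l ^ j)" for j
    by (simp add: Complex.DeMoivre cis_mult[symmetric] algebra_simps)
  have "summable (\<lambda>j. complex_of_real (S (Suc j)) * cis (real (Suc j) * l))"
    unfolding shifted by (rule summable_mult[OF summable_tail])
  then have "S_hat S l = (\<Sum>j. complex_of_real (S (Suc j)) * cis (real (Suc j) * l))"
    unfolding S_hat_def using \<open>S 0 = 0\<close> by (subst suminf_split_head) (auto intro: iffD1[OF summable_Suc_iff])
  also have "\<dots> = cis l * gen_fun (\<lambda>j. S (Suc j)) (cis l)"
    unfolding shifted gen_fun_def by (rule suminf_mult[OF summable_tail])
  finally show ?thesis .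
qed

lemma circle_integral_cis_mult_eq_0:
  assumes "continuous_on (cball 0 1) h" "h holomorphic_on ball 0 1"
  shows "((\<lambda>t. cis t * h (cis t)) has_integral 0) {-pi..pi}"
proof -
  have closed: "pathfinish (part_circlepath 0 1 (-pi) pi) = pathstart (part_circlepath 0 1 (-pi) pi)"
    by (simp add: exp_minus flip: cis_conv_exp)
  have "path_image (part_circlepath 0 1 (-pi) pi) \<subseteq> cball 0 1"
    using path_image_part_circlepath_subset[of "-pi" pi 1 0] sphere_cball by auto
  then have "(h has_contour_integral 0) (part_circlepath 0 1 (-pi) pi)"
    using assms holomorphic_on_imp_differentiable_at
    by (intro Cauchy_theorem_convex[where K = "{}", OF _ _ _ _ _ _ closed]) auto
  then have "((\<lambda>t. h (cis t) * \<i> * cis t) has_integral 0) {-pi..pi}"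
    by (simp add: has_contour_integral_part_circlepath_iff)
  from has_integral_mult_left[OF this, of "- \<i>"] show ?thesis
    by (simp add: algebra_simps)
qed

lemma Re_cayley_cis_eq_poisson_kernel:
  "Re ((1 + complex_of_real s * cis t) / (1 - complex_of_real s * cis t)) = 2 * pi * poisson_kernel s t"
proof -
  have sin_sq: "sin t * sin t = 1 - cos t * cos t"
    using sin_cos_squared_add[of t] by (simp add: power2_eq_square)
  have "Re (1 + complex_of_real s * cis t) * Re (1 - complex_of_real s * cis t)
        + Im (1 + complex_of_real s * cis t) * Im (1 - complex_of_real s * cis t) = 1 - s\<^sup>2"
    by (simp add: power2_eq_square algebra_simps sin_sq)
  moreover have "(Re (1 - complex_of_real s * cis t))\<^sup>2 + (Im (1 - complex_of_real s * cis t))\<^sup>2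
                  = 1 - 2 * s * cos t + s\<^sup>2"
    by (simp add: power2_eq_square algebra_simps sin_sq)
  ultimately show ?thesis
    unfolding poisson_kernel_def Re_divide by simp
qed

lemma poisson_kernel_polar_has_integral_1:
  assumes G_cont: "continuous_on (cball 0 1) G" and G_holo: "G holomorphic_on ball 0 1"
    and small: "\<And>z. norm z \<le> 1 \<Longrightarrow> norm (z * G z) < 1"
    and polar: "\<And>t. cis t * G (cis t) = complex_of_real (s t) * cis (a t)"
  shows "((\<lambda>t. poisson_kernel (s t) (a t)) has_integral 1) {-pi..pi}"
proof -
  have denom_nz: "1 - z * G z \<noteq> 0" if "norm z \<le> 1" for z
    using small[OF that] by auto
  define h where "h z = 2 * G z / (1 - z * G z)" for z
  have "continuous_on (cball 0 1) h"
    unfolding h_def by (intro continuous_intros G_cont) (use denom_nz in auto)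
  moreover have "h holomorphic_on ball 0 1"
    unfolding h_def by (intro holomorphic_intros G_holo) (use denom_nz in auto)
  ultimately have "((\<lambda>t. Re (cis t * h (cis t))) has_integral 0) {-pi..pi}"
    using has_integral_Re[OF circle_integral_cis_mult_eq_0] by fastforce
  from has_integral_add[OF this has_integral_const_real[of 1]]
  have "((\<lambda>t. Re (cis t * h (cis t)) + 1) has_integral (2 * pi)) {-pi..pi}"
    by simp
  from has_integral_divide[OF this, of "2 * pi"]
  have circle: "((\<lambda>t. (Re (cis t * h (cis t)) + 1) / (2 * pi)) has_integral 1) {-pi..pi}"
    by simp
  show ?thesis
  proof (rule has_integral_eq[OF _ circle])
    fix t
    have "(1 + cis t * G (cis t)) / (1 - cis t * G (cis t)) = 1 + cis t * h (cis t)"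
      using denom_nz[of "cis t"] by (simp add: h_def field_simps)
    then have "Re (cis t * h (cis t)) + 1 = Re ((1 + cis t * G (cis t)) / (1 - cis t * G (cis t)))"
      by simp
    also have "\<dots> = 2 * pi * poisson_kernel (s t) (a t)"
      unfolding polar by (rule Re_cayley_cis_eq_poisson_kernel)
    finally show "(Re (cis t * h (cis t)) + 1) / (2 * pi) = poisson_kernel (s t) (a t)"
      by simp
  qed
qed

lemma poisson_kernel_S_hat_has_integral_1:
  assumes law: "prob_law_pos S" and "0 \<le> r" "r < 1"
  shows "((\<lambda>l. poisson_kernel (r * cmod (S_hat S l)) (Arg (S_hat S l) + \<phi>)) has_integral 1) {-pi..pi}"
proof (rule poisson_kernel_polar_has_integral_1)
  define c where "c = complex_of_real r * cis \<phi>"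
  let ?G = "gen_fun (\<lambda>j. S (Suc j))"
  have "(\<lambda>j. S (Suc j)) sums 1"
    using law by (simp add: prob_law_pos_def sums_Suc_iff)
  then have G_props: "summable (\<lambda>j. S (Suc j))" "\<And>j. 0 \<le> S (Suc j)" "suminf (\<lambda>j. S (Suc j)) = 1"
    using law by (auto simp: prob_law_pos_def sums_iff)
  show "continuous_on (cball 0 1) (\<lambda>z. c * ?G z)"
    by (intro continuous_intros continuous_on_gen_fun G_props(1,2))
  show "(\<lambda>z. c * ?G z) holomorphic_on ball 0 1"
    by (intro holomorphic_intros holomorphic_on_gen_fun G_props(1,2))
  show "norm (z * (c * ?G z)) < 1" if "norm z \<le> 1" for z
  proof -
    have "norm z * norm (?G z) \<le> 1"
      using that norm_gen_fun_le[OF G_props(1,2) that] G_props(3) by (simp add: mult_le_one)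
    then have "r * (norm z * norm (?G z)) \<le> r"
      using \<open>0 \<le> r\<close> by (simp add: mult_left_le)
    with \<open>0 \<le> r\<close> \<open>r < 1\<close> show ?thesis
      by (simp add: c_def norm_mult mult.left_commute)
  qed
  show "cis l * (c * ?G (cis l)) = complex_of_real (r * cmod (S_hat S l)) * cis (Arg (S_hat S l) + \<phi>)"
    for l
    using S_hat_eq_cis_gen_fun[OF law, of l] rcis_cmod_Arg[of "S_hat S l"]
    by (simp add: c_def rcis_def cis_mult[symmetric] algebra_simps)
qed

theorem lemma5p2:
  fixes S :: "nat \<Rightarrow> real" and r \<theta> :: real
  assumes "prob_law_pos S"
    and "0 \<le> r" and "r < 1"
    and "-pi < \<theta>" and "\<theta> < pi"
  shows "((\<lambda>l. (1/4) * (1 / pi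
            + poisson_kernel (r * cmod (S_hat S l)) (Arg (S_hat S l) - \<theta>)
            + poisson_kernel (r * cmod (S_hat S l)) (Arg (S_hat S l) + \<theta>)))
          has_integral 1) {-pi..pi}"
proof -
  note minus = poisson_kernel_S_hat_has_integral_1[OF assms(1-3), of "-\<theta>"]
  note plus = poisson_kernel_S_hat_has_integral_1[OF assms(1-3), of \<theta>]
  have "((\<lambda>l. 1 / pi
            + poisson_kernel (r * cmod (S_hat S l)) (Arg (S_hat S l) - \<theta>)
            + poisson_kernel (r * cmod (S_hat S l)) (Arg (S_hat S l) + \<theta>)) has_integral 4)
        {-pi..pi}"
    using has_integral_add[OF has_integral_add[OF has_integral_const_real[of "1 / pi"] minus] plus]
    by simp
  from has_integral_mult_right[OF this, of "1/4"] show ?thesis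
    by simp
qed

end
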